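(* Let $\Omega\subset\mathbb{R}^n$ be a nonempty closed convex set and $f:\mathbb{R}^n\to\mathbb{R}$ differentiable over $\Omega$ such that (i) $f(\bm{x})\ge\underline{f}$ for all $\bm{x}\in\Omega$, (ii) $\|\nabla f(\bm{x})-\nabla f(\bm{y})\|_2\le L\|\bm{x}-\bm{y}\|_2$ for all $\bm{x},\bm{y}\in\Omega$ for some $L>0$, and (iii) the relaxation sequence $\{\omega_k\}\subset[0,\infty)$ satisfies $\sum_{k=0}^\infty\omega_k<\infty$. Suppose $\{\bm{x}_k\}$ is generated by either IGPM without line search or IGPM with line search (described in the context). Then every limit point $\bm{x}^*$ of $\{\bm{x}_k\}$ is a first-order optimal solution of $\min_{\bm{x}\in\Omega}f(\bm{x})$, i.e., $\bm{x}^*=\mathcal{P}_\Omega(\bm{x}^*-\beta\nabla f(\bm{x}^* ))$ (equivalently $-\nabla f(\bm{x}^* )\in\mathcal{N}(\bm{x}^*|\Omega)$).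
   Context: $\mathcal{P}_\Omega$ is Euclidean projection onto $\Omega$ and $\mathcal{N}(\bm{x}|\Omega)$ the normal cone. For $\bm{x}_k\in\Omega$ write $\bm{g}_k=\nabla f(\bm{x}_k)$, $\bm{v}_k=\bm{x}_k-\beta\bm{g}_k$ for a fixed $\beta>0$, and define $p(\bm{z};\bm{x}_k)=\tfrac12\|\bm{z}-\bm{v}_k\|_2^2+\delta_\Omega(\bm{z})$ ($\delta_\Omega$ the $0/+\infty$ indicator of $\Omega$), $\Delta p(\bm{z};\bm{x}_k)=p(\bm{x}_k;\bm{x}_k)-p(\bm{z};\bm{x}_k)$, and $q(\bm{u};\bm{x}_k)=-\tfrac12\|\bm{u}-\bm{v}_k\|_2^2-\delta_\Omega^*(\bm{u})+\tfrac12\|\bm{v}_k\|_2^2$ with $\delta^*_\Omega(\bm{u})=\sup_{\bm{x}\in\Omega}\langle\bm{x},\bm{u}\rangle$. An inexact projection at iteration $k$ is a point $\bm{z}_k\in\Omega$ with $\Delta p(\bm{z}_k;\bm{x}_k)\ge0$ together with some dual point $\bm{u}_k$ such that $\frac{p(\bm{x}_k;\bm{x}_k)-p(\bm{z}_k;\bm{x}_k)+\omega_k}{p(\bm{x}_k;\bm{x}_k)-q(\bm{u}_k;\bm{x}_k)+\omega_k}\ge\gamma$, where $0<\gamma<1$. IGPM without line search: $0<\beta\le1/L$, $\bm{x}_0\in\Omega$, and $\bm{x}_{k+1}=\bm{z}_k$ for all $k$. IGPM with line search: fix $0<\eta<1$, $0<\alpha\le1$, $\beta>0$, $0<\theta<1$,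 $\bm{x}_0\in\Omega$; set $\bm{d}_k=\bm{z}_k-\bm{x}_k$, let $\alpha_k$ be the largest value in $\{\theta^i\alpha: i=0,1,2,\dots\}$ with $f(\bm{x}_k+\alpha_k\bm{d}_k)\le f(\bm{x}_k)+\eta\alpha_k\bm{g}_k^T\bm{d}_k$, and set $\bm{x}_{k+1}=\bm{x}_k+\alpha_k\bm{d}_k$. The algorithms are considered as generating infinite sequences. *)

theory Defs
  imports "HOL-Analysis.Analysis"
begin

text \<open>Setting: the ambient space R^n is an arbitrary Euclidean space 'a.
  grad x is the gradient of f at x; v_k = x_k - beta g_k.\<close>

definition vpt :: "('a::euclidean_space \<Rightarrow> 'a) \<Rightarrow> real \<Rightarrow> 'a \<Rightarrow> 'a" where
  "vpt grad \<beta> x = x - \<beta> *\<^sub>R grad x"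

text \<open>p(z; x) for z in Omega (the indicator term is 0 there).\<close>
definition pfun :: "('a::euclidean_space \<Rightarrow> 'a) \<Rightarrow> real \<Rightarrow> 'a \<Rightarrow> 'a \<Rightarrow> real" where
  "pfun grad \<beta> x z = (1/2) * (norm (z - vpt grad \<beta> x))\<^sup>2"

text \<open>Support function of Omega, delta*_Omega(u) = sup_{y in Omega} <y,u>
  (used only where it is finite, i.e. the set is bounded above).\<close>
definition supp :: "'a::euclidean_space set \<Rightarrow> 'a \<Rightarrow> real" where
  "supp \<Omega> u = (SUP y\<in>\<Omega>. y \<bullet> u)"

definition qfun :: "'a::euclidean_space set \<Rightarrow> ('a \<Rightarrow> 'a) \<Rightarrow> real \<Rightarrow> 'a \<Rightarrow> 'a \<Rightarrow> real" where
  "qfun \<Omega> grad \<beta> x u =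
     - (1/2) * (norm (u - vpt grad \<beta> x))\<^sup>2 - supp \<Omega> u + (1/2) * (norm (vpt grad \<beta> x))\<^sup>2"

text \<open>Inexact projection at the point x with relaxation omega:
  z in Omega, Delta p(z;x) >= 0, and a dual point u (with finite support value)
  such that (p(x;x) - p(z;x) + omega) / (p(x;x) - q(u;x) + omega) >= gamma,
  written in cross-multiplied form.\<close>
definition inexact_proj ::
  "'a::euclidean_space set \<Rightarrow> ('a \<Rightarrow> 'a) \<Rightarrow> real \<Rightarrow> real \<Rightarrow> real \<Rightarrow> 'a \<Rightarrow> 'a \<Rightarrow> 'a \<Rightarrow> bool" where
  "inexact_proj \<Omega> grad \<beta> \<gamma> \<omega> x z u \<longleftrightarrow>
     z \<in> \<Omega> \<and>
     pfun grad \<beta> x x - pfun grad \<beta> x z \<ge> 0 \<and>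
     bdd_above ((\<lambda>y. y \<bullet> u) ` \<Omega>) \<and>
     pfun grad \<beta> x x - pfun grad \<beta> x z + \<omega>
       \<ge> \<gamma> * (pfun grad \<beta> x x - qfun \<Omega> grad \<beta> x u + \<omega>)"

definition IGPM_nols ::
  "'a::euclidean_space set \<Rightarrow> ('a \<Rightarrow> 'a) \<Rightarrow> real \<Rightarrow> real \<Rightarrow> real \<Rightarrow> (nat \<Rightarrow> real)
     \<Rightarrow> (nat \<Rightarrow> 'a) \<Rightarrow> (nat \<Rightarrow> 'a) \<Rightarrow> (nat \<Rightarrow> 'a) \<Rightarrow> bool" where
  "IGPM_nols \<Omega> grad L \<beta> \<gamma> \<omega> x z u \<longleftrightarrow>
     0 < \<beta> \<and> \<beta> \<le> 1 / L \<and> x 0 \<in> \<Omega> \<and>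
     (\<forall>k. inexact_proj \<Omega> grad \<beta> \<gamma> (\<omega> k) (x k) (z k) (u k) \<and> x (Suc k) = z k)"

definition armijo :: "('a::euclidean_space \<Rightarrow> real) \<Rightarrow> ('a \<Rightarrow> 'a) \<Rightarrow> real \<Rightarrow> 'a \<Rightarrow> 'a \<Rightarrow> real \<Rightarrow> bool" where
  "armijo f grad \<eta> x d a \<longleftrightarrow> f (x + a *\<^sub>R d) \<le> f x + \<eta> * a * (grad x \<bullet> d)"

text \<open>IGPM with line search: alpha_k = theta^i alpha with i the least index
  satisfying the Armijo condition (i.e. the largest such value).\<close>
definition IGPM_ls ::
  "('a::euclidean_space \<Rightarrow> real) \<Rightarrow> 'a set \<Rightarrow> ('a \<Rightarrow> 'a) \<Rightarrow> real \<Rightarrow> real \<Rightarrow> real \<Rightarrow> real \<Rightarrow> real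
     \<Rightarrow> (nat \<Rightarrow> real) \<Rightarrow> (nat \<Rightarrow> 'a) \<Rightarrow> (nat \<Rightarrow> 'a) \<Rightarrow> (nat \<Rightarrow> 'a) \<Rightarrow> (nat \<Rightarrow> real) \<Rightarrow> bool" where
  "IGPM_ls f \<Omega> grad \<eta> \<alpha> \<beta> \<theta> \<gamma> \<omega> x z u step \<longleftrightarrow>
     0 < \<eta> \<and> \<eta> < 1 \<and> 0 < \<alpha> \<and> \<alpha> \<le> 1 \<and> 0 < \<beta> \<and> 0 < \<theta> \<and> \<theta> < 1 \<and> x 0 \<in> \<Omega> \<and>
     (\<forall>k. inexact_proj \<Omega> grad \<beta> \<gamma> (\<omega> k) (x k) (z k) (u k) \<and>
          (\<exists>i. step k = \<theta> ^ i * \<alpha> \<and>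
               armijo f grad \<eta> (x k) (z k - x k) (\<theta> ^ i * \<alpha>) \<and>
               (\<forall>j<i. \<not> armijo f grad \<eta> (x k) (z k - x k) (\<theta> ^ j * \<alpha>))) \<and>
          x (Suc k) = x k + step k *\<^sub>R (z k - x k))"

end

theory Submission
  imports Defs
begin

(* The inexactness criterion together with weak duality q <= p bounds the squared
   projected-gradient residual |x_k - P(v_k)|^2 by 2 (Delta p_k + omega_k) / gamma. Both variants
   of the method decrease f by a fixed multiple of Delta p_k (descent lemma; with line search,
   every rejected trial step exceeds (1 - eta) / (L beta)), so as f is bounded below the Delta p_k
   are summable and tend to zero, as do the omega_k. Hence the residual tends to zero, and by
   continuity of x |-> P(x - beta grad f(x)) every limit point is a fixed point of this map. *)

definition delta_pfun :: "('a::euclidean_space \<Rightarrow> 'a) \<Rightarrow> real \<Rightarrow> 'a \<Rightarrow> 'a \<Rightarrow> real" where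
  "delta_pfun grad \<beta> x z = pfun grad \<beta> x x - pfun grad \<beta> x z"

lemma delta_pfun_eq:
  "delta_pfun grad \<beta> x z = - \<beta> * (grad x \<bullet> (z - x)) - (norm (z - x))\<^sup>2 / 2"
  unfolding delta_pfun_def pfun_def vpt_def power2_norm_eq_inner
  by (simp add: algebra_simps inner_commute) (simp add: field_simps)

lemma inner_grad_le_neg_delta_pfun:
  assumes "0 < \<beta>"
  shows "grad x \<bullet> (z - x) \<le> - delta_pfun grad \<beta> x z / \<beta>"
proof -
  have "\<beta> * (grad x \<bullet> (z - x)) \<le> - delta_pfun grad \<beta> x z"
    unfolding delta_pfun_eq by simp
  then show ?thesis using assms by (simp add: field_simps)
qed

lemma delta_pfun_nonneg_imp_norm_le:
  assumes "0 \<le> delta_pfun grad \<beta> x z"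
  shows "(norm (z - x))\<^sup>2 \<le> 2 * \<beta> * - (grad x \<bullet> (z - x))"
  using assms unfolding delta_pfun_eq by simp

lemma convex_segment_mem:
  assumes "convex S" "x \<in> S" "z \<in> S" "0 \<le> t" "t \<le> 1"
  shows "x + t *\<^sub>R (z - x) \<in> S"
proof -
  have "x + t *\<^sub>R (z - x) = (1 - t) *\<^sub>R x + t *\<^sub>R z" by (simp add: algebra_simps)
  then show ?thesis using assms by (simp add: convex_alt)
qed

lemma descent_lemma:
  fixes f :: "'a::real_inner \<Rightarrow> real"
  assumes "convex S"
    and der: "\<forall>y\<in>S. (f has_derivative (\<lambda>h. grad y \<bullet> h)) (at y)"
    and lip: "\<forall>y\<in>S. \<forall>w\<in>S. norm (grad y - grad w) \<le> L * norm (y - w)"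
    and "x \<in> S" "y \<in> S"
  shows "f y \<le> f x + grad x \<bullet> (y - x) + L / 2 * (norm (y - x))\<^sup>2"
proof -
  define d where "d = y - x"
  define \<phi> where "\<phi> t = f (x + t *\<^sub>R d) - t * (grad x \<bullet> d) - L / 2 * t\<^sup>2 * (norm d)\<^sup>2" for t
  have "\<phi> 1 \<le> \<phi> 0"
  proof (rule DERIV_nonpos_imp_nonincreasing[of 0 1 \<phi>])
    fix t :: real assume t: "0 \<le> t" "t \<le> 1"
    define p where "p = x + t *\<^sub>R d"
    have p: "p \<in> S" unfolding p_def d_def using convex_segment_mem assms t by blast
    have line: "((\<lambda>t. x + t *\<^sub>R d) has_derivative (\<lambda>s. s *\<^sub>R d)) (at t)"
      by (auto intro!: derivative_eq_intros)
    have "((\<lambda>t. f (x + t *\<^sub>R d)) has_derivative (\<lambda>s. grad p \<bullet> (s *\<^sub>R d))) (at t)"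
      using has_derivative_compose[OF line, of f "\<lambda>h. grad p \<bullet> h"] der p
      unfolding p_def by auto
    then have "((\<lambda>t. f (x + t *\<^sub>R d)) has_real_derivative grad p \<bullet> d) (at t)"
      by (simp add: has_field_derivative_def mult.commute[of _ "grad p \<bullet> d"])
    then have "(\<phi> has_real_derivative grad p \<bullet> d - grad x \<bullet> d - L * t * (norm d)\<^sup>2) (at t)"
      unfolding \<phi>_def by (auto intro!: derivative_eq_intros)
    moreover have "grad p \<bullet> d - grad x \<bullet> d \<le> L * t * (norm d)\<^sup>2"
    proof -
      have "grad p \<bullet> d - grad x \<bullet> d \<le> norm (grad p - grad x) * norm d"
        by (metis inner_diff_left norm_cauchy_schwarz)
      also have "\<dots> \<le> L * norm (p - x) * norm d"
        using lip p assms(4) by (intro mult_right_mono) auto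
      also have "\<dots> = L * t * (norm d)\<^sup>2"
        using t by (simp add: p_def power2_eq_square)
      finally show ?thesis .
    qed
    ultimately show "\<exists>D. (\<phi> has_real_derivative D) (at t) \<and> D \<le> 0" by force
  qed simp
  then show ?thesis unfolding \<phi>_def d_def by simp
qed

(* Weak duality: expand 0 <= |z + u - v|^2. *)
lemma qfun_le_pfun:
  assumes "bdd_above ((\<lambda>y. y \<bullet> u) ` \<Omega>)" and "z \<in> \<Omega>"
  shows "qfun \<Omega> grad \<beta> x u \<le> pfun grad \<beta> x z"
proof -
  define v where "v = vpt grad \<beta> x"
  have "z \<bullet> u \<le> supp \<Omega> u"
    unfolding supp_def using assms by (rule cSUP_upper2) simp
  moreover have "(norm (z + u - v))\<^sup>2 = (norm (z - v))\<^sup>2 + (norm (u - v))\<^sup>2 + 2 * (z \<bullet> u) - (norm v)\<^sup>2"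
    unfolding power2_norm_eq_inner by (simp add: algebra_simps inner_commute)
  moreover have "0 \<le> (norm (z + u - v))\<^sup>2" by simp
  ultimately show ?thesis
    unfolding qfun_def pfun_def v_def[symmetric] by linarith
qed

lemma delta_pfun_closest_point_ge:
  fixes \<Omega> :: "'a::euclidean_space set"
  assumes "closed \<Omega>" "convex \<Omega>" "\<Omega> \<noteq> {}" "x \<in> \<Omega>"
  shows "(norm (x - closest_point \<Omega> (vpt grad \<beta> x)))\<^sup>2 / 2
    \<le> delta_pfun grad \<beta> x (closest_point \<Omega> (vpt grad \<beta> x))"
proof -
  define v where "v = vpt grad \<beta> x"
  define P where "P = closest_point \<Omega> v"
  have "(v - P) \<bullet> (x - P) \<le> 0"
    unfolding P_def
    by (rule any_closest_point_dot[OF assms(2,1) closest_point_in_set[OF assms(1,3)] assms(4)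
          closest_point_exists(2)[OF assms(1,3)]])
  moreover have "(norm (x - v))\<^sup>2 = (norm (x - P))\<^sup>2 + (norm (P - v))\<^sup>2 - 2 * ((v - P) \<bullet> (x - P))"
    unfolding power2_norm_eq_inner by (simp add: algebra_simps inner_commute)
  ultimately show ?thesis
    unfolding delta_pfun_def pfun_def v_def[symmetric] P_def[symmetric] by linarith
qed

lemma inexact_proj_residual_le:
  fixes \<Omega> :: "'a::euclidean_space set"
  assumes "closed \<Omega>" "convex \<Omega>" "\<Omega> \<noteq> {}" "x \<in> \<Omega>"
    and proj: "inexact_proj \<Omega> grad \<beta> \<gamma> \<omega> x z u" and "0 \<le> \<omega>" "0 < \<gamma>"
  shows "\<gamma> * (norm (x - closest_point \<Omega> (vpt grad \<beta> x)))\<^sup>2 / 2 \<le> delta_pfun grad \<beta> x z + \<omega>"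
proof -
  define P where "P = closest_point \<Omega> (vpt grad \<beta> x)"
  have "P \<in> \<Omega>" unfolding P_def using assms(1,3) by (rule closest_point_in_set)
  then have "qfun \<Omega> grad \<beta> x u \<le> pfun grad \<beta> x P"
    using proj unfolding inexact_proj_def by (blast intro: qfun_le_pfun)
  moreover have "(norm (x - P))\<^sup>2 / 2 \<le> pfun grad \<beta> x x - pfun grad \<beta> x P"
    using delta_pfun_closest_point_ge[OF assms(1-4), of grad \<beta>]
    unfolding P_def delta_pfun_def .
  ultimately have "(norm (x - P))\<^sup>2 / 2 \<le> pfun grad \<beta> x x - qfun \<Omega> grad \<beta> x u + \<omega>"
    using \<open>0 \<le> \<omega>\<close> by linarith
  then have "\<gamma> * ((norm (x - P))\<^sup>2 / 2) \<le> \<gamma> * (pfun grad \<beta> x x - qfun \<Omega> grad \<beta> x u + \<omega>)"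
    using \<open>0 < \<gamma>\<close> by (intro mult_left_mono) auto
  then show ?thesis
    using proj unfolding P_def inexact_proj_def delta_pfun_def by auto
qed

lemma sufficient_decrease_full_step:
  fixes f :: "'a::euclidean_space \<Rightarrow> real"
  assumes "convex \<Omega>"
    and "\<forall>y\<in>\<Omega>. (f has_derivative (\<lambda>h. grad y \<bullet> h)) (at y)"
    and "\<forall>y\<in>\<Omega>. \<forall>w\<in>\<Omega>. norm (grad y - grad w) \<le> L * norm (y - w)"
    and "x \<in> \<Omega>" "z \<in> \<Omega>" "0 < \<beta>" "\<beta> \<le> 1 / L" "0 < L"
  shows "delta_pfun grad \<beta> x z / \<beta> \<le> f x - f z"
proof -
  have "L \<le> 1 / \<beta>" using assms(6-8) by (simp add: field_simps)
  then have "L / 2 * (norm (z - x))\<^sup>2 \<le> 1 / \<beta> / 2 * (norm (z - x))\<^sup>2"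
    by (intro mult_right_mono) auto
  moreover have "delta_pfun grad \<beta> x z / \<beta> = - (grad x \<bullet> (z - x)) - 1 / \<beta> / 2 * (norm (z - x))\<^sup>2"
    unfolding delta_pfun_eq using \<open>0 < \<beta>\<close> by (simp add: field_simps)
  ultimately show ?thesis using descent_lemma[OF assms(1-5)] by linarith
qed

lemma armijo_rejected_step_gt:
  fixes f :: "'a::euclidean_space \<Rightarrow> real"
  assumes "convex \<Omega>"
    and "\<forall>y\<in>\<Omega>. (f has_derivative (\<lambda>h. grad y \<bullet> h)) (at y)"
    and "\<forall>y\<in>\<Omega>. \<forall>w\<in>\<Omega>. norm (grad y - grad w) \<le> L * norm (y - w)"
    and "x \<in> \<Omega>" "z \<in> \<Omega>" "0 < \<beta>" "0 < L" "\<eta> \<le> 1" "0 < t" "t \<le> 1"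
    and "0 \<le> delta_pfun grad \<beta> x z"
    and rejected: "\<not> armijo f grad \<eta> x (z - x) t"
  shows "(1 - \<eta>) / (L * \<beta>) < t"
proof -
  define G where "G = grad x \<bullet> (z - x)"
  define N where "N = (norm (z - x))\<^sup>2"
  have "f (x + t *\<^sub>R (z - x)) \<le> f x + t * G + L / 2 * t\<^sup>2 * N"
    using descent_lemma[OF assms(1-4) convex_segment_mem[OF assms(1,4,5)]] \<open>0 < t\<close> \<open>t \<le> 1\<close>
    by (simp add: G_def N_def power_mult_distrib ac_simps)
  moreover have "f x + \<eta> * t * G < f (x + t *\<^sub>R (z - x))"
    using rejected unfolding armijo_def G_def by simp
  ultimately have "t * ((1 - \<eta>) * - G) < t * (L / 2 * t * N)"
    by (simp add: algebra_simps power2_eq_square)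
  then have "(1 - \<eta>) * - G < L / 2 * t * N"
    using \<open>0 < t\<close> mult_less_cancel_left_pos by blast
  moreover have "(1 - \<eta>) * N \<le> (1 - \<eta>) * (2 * \<beta> * - G)"
    using delta_pfun_nonneg_imp_norm_le[OF assms(11)] \<open>\<eta> \<le> 1\<close>
    unfolding G_def N_def by (intro mult_left_mono) auto
  moreover have "2 * \<beta> * ((1 - \<eta>) * - G) < 2 * \<beta> * (L / 2 * t * N)"
    using calculation(1) \<open>0 < \<beta>\<close> by (intro mult_strict_left_mono) auto
  ultimately have "(1 - \<eta>) * N < (L * \<beta> * t) * N"
    by (simp add: algebra_simps)
  then have "1 - \<eta> < L * \<beta> * t"
    using N_def by (meson mult_right_mono not_less zero_le_power2)
  then show ?thesis
    using assms(6,7) by (simp add: field_simps)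
qed

lemma armijo_backtracking_step_ge:
  fixes f :: "'a::euclidean_space \<Rightarrow> real"
  assumes "convex \<Omega>"
    and "\<forall>y\<in>\<Omega>. (f has_derivative (\<lambda>h. grad y \<bullet> h)) (at y)"
    and "\<forall>y\<in>\<Omega>. \<forall>w\<in>\<Omega>. norm (grad y - grad w) \<le> L * norm (y - w)"
    and "x \<in> \<Omega>" "z \<in> \<Omega>" "0 < \<beta>" "0 < L" "\<eta> \<le> 1"
    and "0 < \<alpha>" "\<alpha> \<le> 1" "0 < \<theta>" "\<theta> \<le> 1"
    and "0 \<le> delta_pfun grad \<beta> x z"
    and rejected: "\<forall>j<i. \<not> armijo f grad \<eta> x (z - x) (\<theta> ^ j * \<alpha>)"
  shows "min \<alpha> (\<theta> * (1 - \<eta>) / (L * \<beta>)) \<le> \<theta> ^ i * \<alpha>"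
proof (cases i)
  case (Suc j)
  have "0 < \<theta> ^ j * \<alpha>" "\<theta> ^ j * \<alpha> \<le> 1"
    using assms(9-12) by (auto intro!: mult_le_one power_le_one)
  then have "(1 - \<eta>) / (L * \<beta>) < \<theta> ^ j * \<alpha>"
    using armijo_rejected_step_gt[OF assms(1-8) _ _ assms(13)] rejected Suc by blast
  then have "\<theta> * ((1 - \<eta>) / (L * \<beta>)) \<le> \<theta> * (\<theta> ^ j * \<alpha>)"
    using \<open>0 < \<theta>\<close> by (intro mult_left_mono) auto
  then show ?thesis
    using Suc by (simp add: mult.assoc)
qed simp

lemma armijo_sufficient_decrease:
  assumes "armijo f grad \<eta> x (z - x) s" "0 \<le> c" "c \<le> s" "0 \<le> \<eta>" "0 < \<beta>"
    and "0 \<le> delta_pfun grad \<beta> x z"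
  shows "\<eta> * c / \<beta> * delta_pfun grad \<beta> x z \<le> f x - f (x + s *\<^sub>R (z - x))"
proof -
  define D where "D = delta_pfun grad \<beta> x z / \<beta>"
  have "0 \<le> D" unfolding D_def using assms(5,6) by simp
  have "\<eta> * c * D \<le> \<eta> * s * D"
    using assms(3,4) \<open>0 \<le> D\<close> by (intro mult_right_mono mult_left_mono) auto
  also have "\<eta> * s * D \<le> \<eta> * s * - (grad x \<bullet> (z - x))"
    using inner_grad_le_neg_delta_pfun[OF assms(5), of grad x z] assms(2-4)
    unfolding D_def by (intro mult_left_mono) auto
  also have "\<dots> \<le> f x - f (x + s *\<^sub>R (z - x))"
    using assms(1) unfolding armijo_def by simp
  finally show ?thesis unfolding D_def by simp
qed

lemma IGPM_nols_iterates_mem: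
  assumes "IGPM_nols \<Omega> grad L \<beta> \<gamma> \<omega> x z u"
  shows "x k \<in> \<Omega>"
  using assms by (cases k) (auto simp: IGPM_nols_def inexact_proj_def)

lemma IGPM_nols_decrease:
  fixes f :: "'a::euclidean_space \<Rightarrow> real"
  assumes "convex \<Omega>"
    and "\<forall>y\<in>\<Omega>. (f has_derivative (\<lambda>h. grad y \<bullet> h)) (at y)"
    and "\<forall>y\<in>\<Omega>. \<forall>w\<in>\<Omega>. norm (grad y - grad w) \<le> L * norm (y - w)"
    and "0 < L" and igpm: "IGPM_nols \<Omega> grad L \<beta> \<gamma> \<omega> x z u"
  shows "delta_pfun grad \<beta> (x k) (z k) / \<beta> \<le> f (x k) - f (x (Suc k))"
  using sufficient_decrease_full_step[OF assms(1-3) IGPM_nols_iterates_mem[OF igpm]] igpm assms(4)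
  unfolding IGPM_nols_def inexact_proj_def by auto

lemma IGPM_ls_iterates_mem:
  assumes "convex \<Omega>" and igpm: "IGPM_ls f \<Omega> grad \<eta> \<alpha> \<beta> \<theta> \<gamma> \<omega> x z u step"
  shows "x k \<in> \<Omega>"
proof (induction k)
  case 0
  then show ?case using igpm unfolding IGPM_ls_def by simp
next
  case (Suc k)
  obtain i where "step k = \<theta> ^ i * \<alpha>" and next_iterate: "x (Suc k) = x k + step k *\<^sub>R (z k - x k)"
    and "0 < \<alpha>" "\<alpha> \<le> 1" "0 < \<theta>" "\<theta> < 1" and "z k \<in> \<Omega>"
    using igpm unfolding IGPM_ls_def inexact_proj_def by blast
  then have "0 \<le> step k" "step k \<le> 1"
    by (auto intro!: mult_le_one power_le_one)
  then show ?case
    unfolding next_iterate using convex_segment_mem assms(1) Suc.IH \<open>z k \<in> \<Omega>\<close> by blast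
qed

lemma IGPM_ls_decrease:
  fixes f :: "'a::euclidean_space \<Rightarrow> real"
  assumes "convex \<Omega>"
    and "\<forall>y\<in>\<Omega>. (f has_derivative (\<lambda>h. grad y \<bullet> h)) (at y)"
    and "\<forall>y\<in>\<Omega>. \<forall>w\<in>\<Omega>. norm (grad y - grad w) \<le> L * norm (y - w)"
    and "0 < L" and igpm: "IGPM_ls f \<Omega> grad \<eta> \<alpha> \<beta> \<theta> \<gamma> \<omega> x z u step"
  shows "\<eta> * min \<alpha> (\<theta> * (1 - \<eta>) / (L * \<beta>)) / \<beta> * delta_pfun grad \<beta> (x k) (z k)
    \<le> f (x k) - f (x (Suc k))"
proof -
  obtain i where step: "step k = \<theta> ^ i * \<alpha>"
    and accepted: "armijo f grad \<eta> (x k) (z k - x k) (\<theta> ^ i * \<alpha>)"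
    and rejected: "\<forall>j<i. \<not> armijo f grad \<eta> (x k) (z k - x k) (\<theta> ^ j * \<alpha>)"
    and next_iterate: "x (Suc k) = x k + step k *\<^sub>R (z k - x k)"
    using igpm unfolding IGPM_ls_def by blast
  have par: "0 < \<eta>" "\<eta> < 1" "0 < \<alpha>" "\<alpha> \<le> 1" "0 < \<beta>" "0 < \<theta>" "\<theta> < 1"
    and "z k \<in> \<Omega>" and "0 \<le> delta_pfun grad \<beta> (x k) (z k)"
    using igpm unfolding IGPM_ls_def inexact_proj_def delta_pfun_def by auto
  moreover have "min \<alpha> (\<theta> * (1 - \<eta>) / (L * \<beta>)) \<le> \<theta> ^ i * \<alpha>"
    using calculation by (intro armijo_backtracking_step_ge[OF assms(1-3) IGPM_ls_iterates_mem[OF assms(1) igpm]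
          _ _ assms(4) _ _ _ _ _ _ rejected]) auto
  ultimately show ?thesis
    unfolding next_iterate step using assms(4) by (intro armijo_sufficient_decrease[OF accepted]) auto
qed

lemma summable_if_decrease_bounded_below:
  fixes a b :: "nat \<Rightarrow> real"
  assumes "\<And>k. 0 \<le> a k" "\<And>k. a k \<le> b k - b (Suc k)" "\<And>k. lo \<le> b k"
  shows "summable a"
proof (rule summableI_nonneg_bounded)
  show "(\<Sum>k<n. a k) \<le> b 0 - lo" for n
  proof -
    have "(\<Sum>k<n. a k) \<le> (\<Sum>k<n. b k - b (Suc k))" by (intro sum_mono assms(2))
    also have "\<dots> = b 0 - b n" by (rule sum_lessThan_telescope')
    finally show ?thesis using assms(3)[of n] by simp
  qed
qed (use assms(1) in simp)

lemma inexact_proj_residual_tendsto_zero: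
  fixes \<Omega> :: "'a::euclidean_space set"
  assumes "closed \<Omega>" "convex \<Omega>" "\<Omega> \<noteq> {}" "\<And>k. x k \<in> \<Omega>"
    and "\<And>k. inexact_proj \<Omega> grad \<beta> \<gamma> (\<omega> k) (x k) (z k) (u k)"
    and "\<And>k. 0 \<le> \<omega> k" "\<omega> \<longlonglongrightarrow> 0" "(\<lambda>k. delta_pfun grad \<beta> (x k) (z k)) \<longlonglongrightarrow> 0" "0 < \<gamma>"
  shows "(\<lambda>k. x k - closest_point \<Omega> (vpt grad \<beta> (x k))) \<longlonglongrightarrow> 0"
proof -
  define e where "e k = norm (x k - closest_point \<Omega> (vpt grad \<beta> (x k)))" for k
  have "(\<lambda>k. (e k)\<^sup>2) \<longlonglongrightarrow> 0"
  proof (rule tendsto_sandwich[of "\<lambda>_. 0" _ _ "\<lambda>k. 2 * (delta_pfun grad \<beta> (x k) (z k) + \<omega> k) / \<gamma>"])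
    show "\<forall>\<^sub>F k in sequentially. (e k)\<^sup>2 \<le> 2 * (delta_pfun grad \<beta> (x k) (z k) + \<omega> k) / \<gamma>"
      using inexact_proj_residual_le[OF assms(1-4,5,6,9)] \<open>0 < \<gamma>\<close>
      by (intro always_eventually allI) (simp add: e_def field_simps)
    have "(\<lambda>k. delta_pfun grad \<beta> (x k) (z k) + \<omega> k) \<longlonglongrightarrow> 0"
      using tendsto_add[OF assms(8,7)] by simp
    then show "(\<lambda>k. 2 * (delta_pfun grad \<beta> (x k) (z k) + \<omega> k) / \<gamma>) \<longlonglongrightarrow> 0"
      by (intro tendsto_divide_zero tendsto_mult_right_zero)
  qed auto
  then have "(\<lambda>k. sqrt ((e k)\<^sup>2)) \<longlonglongrightarrow> 0"
    using tendsto_real_sqrt by fastforce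
  then show ?thesis
    by (simp add: e_def tendsto_norm_zero_iff)
qed

lemma limit_point_fixed_point:
  fixes T :: "'a::real_normed_vector \<Rightarrow> 'a"
  assumes "closed S" "continuous_on S T" "\<And>k. y k \<in> S" "(\<lambda>k. y k - T (y k)) \<longlonglongrightarrow> 0"
    and "strict_mono r" "(y \<circ> r) \<longlonglongrightarrow> l"
  shows "l = T l"
proof -
  have "l \<in> S" using closed_sequentially[OF assms(1) _ assms(6)] assms(3) by auto
  have "(\<lambda>k. T (y (r k))) \<longlonglongrightarrow> T l"
    using continuous_on_tendsto_compose[OF assms(2) assms(6)[unfolded comp_def] \<open>l \<in> S\<close>] assms(3)
    by simp
  then have "(\<lambda>k. y (r k) - T (y (r k))) \<longlonglongrightarrow> l - T l"
    using assms(6)[unfolded comp_def] by (rule tendsto_diff[rotated])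
  moreover have "(\<lambda>k. y (r k) - T (y (r k))) \<longlonglongrightarrow> 0"
    using LIMSEQ_subseq_LIMSEQ[OF assms(4,5)] by (simp add: comp_def)
  ultimately have "l - T l = 0" by (rule LIMSEQ_unique)
  then show ?thesis by simp
qed

lemma continuous_on_projected_gradient_map:
  fixes \<Omega> :: "'a::euclidean_space set"
  assumes "closed \<Omega>" "convex \<Omega>" "\<Omega> \<noteq> {}" "continuous_on \<Omega> grad"
  shows "continuous_on \<Omega> (\<lambda>y. closest_point \<Omega> (y - \<beta> *\<^sub>R grad y))"
  by (rule continuous_on_compose2[OF continuous_on_closest_point[OF assms(2,1,3)], of _ "\<lambda>y. y - \<beta> *\<^sub>R grad y"])
    (auto intro!: continuous_intros assms(4))

theorem theorem3p4:
  fixes \<Omega> :: "'a::euclidean_space set"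
    and f :: "'a \<Rightarrow> real" and grad :: "'a \<Rightarrow> 'a"
    and flow L \<beta> \<gamma> \<eta> \<alpha> \<theta> :: real
    and \<omega> :: "nat \<Rightarrow> real" and step :: "nat \<Rightarrow> real"
    and x z u :: "nat \<Rightarrow> 'a" and xstar :: 'a
  assumes "\<Omega> \<noteq> {}" and "closed \<Omega>" and "convex \<Omega>"
    and "\<forall>y\<in>\<Omega>. (f has_derivative (\<lambda>h. grad y \<bullet> h)) (at y)"
    and "\<forall>y\<in>\<Omega>. f y \<ge> flow"
    and "L > 0"
    and "\<forall>y\<in>\<Omega>. \<forall>w\<in>\<Omega>. norm (grad y - grad w) \<le> L * norm (y - w)"
    and "\<forall>k. \<omega> k \<ge> 0" and "summable \<omega>"
    and "0 < \<gamma>" and "\<gamma> < 1"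
    and "IGPM_nols \<Omega> grad L \<beta> \<gamma> \<omega> x z u \<or> IGPM_ls f \<Omega> grad \<eta> \<alpha> \<beta> \<theta> \<gamma> \<omega> x z u step"
    and "\<exists>r. strict_mono r \<and> (x \<circ> r) \<longlonglongrightarrow> xstar"
  shows "xstar = closest_point \<Omega> (xstar - \<beta> *\<^sub>R grad xstar)"
proof -
  define D where "D k = delta_pfun grad \<beta> (x k) (z k)" for k
  have "0 < \<beta>" and proj: "\<And>k. inexact_proj \<Omega> grad \<beta> \<gamma> (\<omega> k) (x k) (z k) (u k)"
    using assms(12) unfolding IGPM_nols_def IGPM_ls_def by auto
  obtain C where "0 < C" and mem: "\<And>k. x k \<in> \<Omega>" and decrease: "\<And>k. C * D k \<le> f (x k) - f (x (Suc k))"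
    using assms(12)
  proof
    assume nols: "IGPM_nols \<Omega> grad L \<beta> \<gamma> \<omega> x z u"
    show thesis
      using that[of "1 / \<beta>"] IGPM_nols_iterates_mem[OF nols] IGPM_nols_decrease[OF assms(3,4,7,6) nols]
        \<open>0 < \<beta>\<close>
      unfolding D_def by simp
  next
    assume ls: "IGPM_ls f \<Omega> grad \<eta> \<alpha> \<beta> \<theta> \<gamma> \<omega> x z u step"
    then have "0 < \<eta> * min \<alpha> (\<theta> * (1 - \<eta>) / (L * \<beta>)) / \<beta>"
      using assms(6) unfolding IGPM_ls_def by auto
    then show thesis
      using that IGPM_ls_iterates_mem[OF assms(3) ls] IGPM_ls_decrease[OF assms(3,4,7,6) ls]
      unfolding D_def by blast
  qed
  have "0 \<le> D k" for k using proj unfolding D_def delta_pfun_def inexact_proj_def by simp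
  then have "summable (\<lambda>k. C * D k)"
    using assms(5) mem \<open>0 < C\<close> decrease
    by (intro summable_if_decrease_bounded_below[where b = "f \<circ> x" and lo = flow]) auto
  then have "D \<longlonglongrightarrow> 0" using \<open>0 < C\<close> by (simp add: summable_LIMSEQ_zero)
  then have "(\<lambda>k. x k - closest_point \<Omega> (x k - \<beta> *\<^sub>R grad (x k))) \<longlonglongrightarrow> 0"
    using inexact_proj_residual_tendsto_zero[OF assms(2,3,1) mem proj] assms(8,10)
      summable_LIMSEQ_zero[OF assms(9)] unfolding D_def vpt_def by auto
  moreover have "continuous_on \<Omega> grad"
    using assms(6,7) by (intro lipschitz_on_continuous_on[of L]) (auto simp: lipschitz_on_def dist_norm)
  ultimately show ?thesis
    using assms(13) mem continuous_on_projected_gradient_map[OF assms(2,3,1)]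
      limit_point_fixed_point[OF assms(2)] by blast
qed

end
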